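(* Let $\mathcal H$ be the $5$-uniform hypergraph defined below. Then $\mathcal{H}\setminus\{z\}$ has a fast winning strategy; that is, in the game in which FP and SP alternately claim previously unclaimed edges of $K^5_{\mathbb{N}}$ (FP first), SP has a strategy ensuring that after his seventh move his claimed edges contain a copy of $\mathcal{H}\setminus\{z\}$, regardless of FP's moves.
   Context: $\mathcal{H}$ has vertex set $\{z, v_1,\dots,v_9\}$ and edges $r=\{z,v_1,v_3,v_5,v_8\}$, $g=\{z,v_2,v_4,v_7,v_9\}$, $a=\{v_1,v_4,v_6,v_8,v_9\}$, $b=\{v_9,v_1,v_2,v_3,v_4\}$, and $e_i=\{v_i,v_{i+1},v_{i+2},v_{i+3},v_{i+4}\}$ for $i=1,\dots,5$. $\mathcal{H}\setminus\{z\}$ is obtained by deleting $z$ and the edges $r,g$; it has $7$ edges. $K^5_{\mathbb N}$ is the complete $5$-uniform hypergraph on $\mathbb N$; a copy is a subhypergraph isomorphic to the given one. *)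

theory Defs
  imports Main
begin

text \<open>The hypergraph H: vertex z is encoded as 0, vertex v_i as i (1 \<le> i \<le> 9).\<close>

definition H_vertices :: "nat set" where
  "H_vertices = {0..9}"

definition H_edges :: "nat set set" where
  "H_edges =
     {{0,1,3,5,8}, {0,2,4,7,9}, {1,4,6,8,9}, {9,1,2,3,4}}
     \<union> {{i, i+1, i+2, i+3, i+4} | i. 1 \<le> i \<and> i \<le> 5}"

definition del_vertex_V :: "nat set \<Rightarrow> nat \<Rightarrow> nat set" where
  "del_vertex_V V x = V - {x}"

definition del_vertex_E :: "nat set set \<Rightarrow> nat \<Rightarrow> nat set set" where
  "del_vertex_E E x = {e \<in> E. x \<notin> e}"

definition contains_copy :: "nat set set \<Rightarrow> nat set \<Rightarrow> nat set set \<Rightarrow> bool" where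
  "contains_copy S V E \<longleftrightarrow> (\<exists>\<phi> :: nat \<Rightarrow> nat. inj_on \<phi> V \<and> (\<forall>e\<in>E. \<phi> ` e \<in> S))"

definition legal :: "nat set list \<Rightarrow> nat set \<Rightarrow> bool" where
  "legal h e \<longleftrightarrow> card e = 5 \<and> e \<notin> set h"

text \<open>Since fp ranges over all sequences, this covers all adaptive FP strategies.\<close>
fun play :: "(nat set list \<Rightarrow> nat set) \<Rightarrow> (nat \<Rightarrow> nat set) \<Rightarrow> nat \<Rightarrow> nat set list" where
  "play \<sigma> fp 0 = []"
| "play \<sigma> fp (Suc i) =
     (let h = play \<sigma> fp i @ [fp i] in h @ [\<sigma> h])"

text \<open>SP's claimed edges in a history (odd positions, FP moves first).\<close>
definition sp_edges :: "nat set list \<Rightarrow> nat set set" where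
  "sp_edges h = {h ! j | j. j < length h \<and> odd j}"

definition sp_fast_win :: "nat \<Rightarrow> nat set \<Rightarrow> nat set set \<Rightarrow> bool" where
  "sp_fast_win n V E \<longleftrightarrow>
     (\<exists>\<sigma>. \<forall>fp.
        (\<forall>i<n. legal (play \<sigma> fp i) (fp i)) \<longrightarrow>
          (\<forall>i<n. legal (play \<sigma> fp i @ [fp i]) (\<sigma> (play \<sigma> fp i @ [fp i])))
          \<and> contains_copy (sp_edges (play \<sigma> fp n)) V E)"

end

theory Submission
  imports Defs
begin

text \<open>
  SP claims the five windows \<open>x ` {i..i+4}\<close>, \<open>i = 1..5\<close>, of a path \<open>x 1 < \<dots> < x 9\<close>; they
  form the edges \<open>e\<^sub>1, \<dots>, e\<^sub>5\<close> of \<open>H - z\<close>. Each window contains a vertex larger than every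
  vertex claimed before, so FP cannot have taken it, and no edge claimed in the first five rounds
  contains both \<open>x 1\<close> and \<open>x 9\<close>. Together with the windows, the images under \<open>x\<close> of each
  of the index pairs \<open>(Y1, A1)\<close>, \<open>(Y1, B1)\<close>, \<open>(Y2, A2)\<close>, \<open>(Y2, B2)\<close> (all containing 1 and 9)
  span a copy of \<open>H - z\<close>. FP's sixth move meets at most one of the two triples, so SP claims the \<open>Y\<close> of an
  untouched one, and FP's seventh move leaves one of its two completions free.
\<close>

lemma Min_image_strict_mono_on:
  fixes x :: "nat \<Rightarrow> 'b::linorder"
  assumes "strict_mono_on {a..b} x" "a \<le> b"
  shows "Min (x ` {a..b}) = x a"
  using assms by (intro Min_eqI) (auto intro: strict_mono_on_leD)

lemma Max_image_strict_mono_on: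
  fixes x :: "nat \<Rightarrow> 'b::linorder"
  assumes "strict_mono_on {a..b} x" "a \<le> b"
  shows "Max (x ` {a..b}) = x b"
  using assms by (intro Max_eqI) (auto intro: strict_mono_on_leD)

lemma play_Suc: "play \<sigma> fp (Suc i) = play \<sigma> fp i @ [fp i, \<sigma> (play \<sigma> fp i @ [fp i])]"
  by (simp add: Let_def)

lemma sp_edges_nth: "j < length h \<Longrightarrow> odd j \<Longrightarrow> h ! j \<in> sp_edges h"
  unfolding sp_edges_def by blast

lemma contains_copy_permute:
  assumes "inj_on x V" "bij_betw \<pi> V V" "\<forall>e\<in>E. x ` \<pi> ` e \<in> S"
  shows "contains_copy S V E"
  unfolding contains_copy_def
proof (intro exI conjI)
  show "inj_on (x \<circ> \<pi>) V"
    using assms(1,2) by (auto simp: bij_betw_def intro: comp_inj_on)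
  show "\<forall>e\<in>E. (x \<circ> \<pi>) ` e \<in> S"
    using assms(3) by (simp add: image_comp)
qed

lemma reply_from_two_triples:
  assumes "distinct [Y, A, B, Y', A', B']" "{Y, A, B, Y', A', B'} \<inter> set h = {}"
    and s: "s = (if f \<in> {Y, A, B} then Y' else Y)"
    and t: "t = (if s = Y then (if A \<in> set (h @ [f, s, g]) then B else A)
                 else (if A' \<in> set (h @ [f, s, g]) then B' else A'))"
  shows "s \<notin> set (h @ [f])" and "t \<notin> set (h @ [f, s, g])"
    and "s = Y \<and> t \<in> {A, B} \<or> s = Y' \<and> t \<in> {A', B'}"
proof -
  have "Y \<notin> set h" "A \<notin> set h" "B \<notin> set h" "Y' \<notin> set h" "A' \<notin> set h" "B' \<notin> set h"
    using assms(2) by auto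
  then show "s \<notin> set (h @ [f])" "t \<notin> set (h @ [f, s, g])"
    and "s = Y \<and> t \<in> {A, B} \<or> s = Y' \<and> t \<in> {A', B'}"
    using assms(1) unfolding s t by auto
qed

text \<open>
  \<open>Y1\<close> and \<open>A1\<close> are the edges \<open>b\<close> and \<open>a\<close> of \<open>H - z\<close>; \<open>B1\<close> is the image of \<open>a\<close>
  under \<open>i \<mapsto> 9 - i\<close> (fixing 9), and \<open>(Y2, A2, B2)\<close> is the image of \<open>(Y1, A1, B1)\<close>
  under \<open>i \<mapsto> 10 - i\<close>.
\<close>

definition Y1 :: "nat set" where "Y1 = {1,2,3,4,9}"
definition A1 :: "nat set" where "A1 = {1,4,6,8,9}"
definition B1 :: "nat set" where "B1 = {1,3,5,8,9}"
definition Y2 :: "nat set" where "Y2 = {1,6,7,8,9}"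
definition A2 :: "nat set" where "A2 = {1,2,4,6,9}"
definition B2 :: "nat set" where "B2 = {1,2,5,7,9}"

lemma H_minus_z_vertices: "del_vertex_V H_vertices 0 = {1..9}"
  by (auto simp: del_vertex_V_def H_vertices_def)

lemma H_minus_z_edges:
  "del_vertex_E H_edges 0 = {A1, Y1, {1..5}, {2..6}, {3..7}, {4..8}, {5..9}}"
proof -
  have windows: "{{i, i+1, i+2, i+3, i+4} | i::nat. 1 \<le> i \<and> i \<le> 5}
      = (\<lambda>i. {i, i+1, i+2, i+3, i+4}) ` {1..5}"
    by auto
  show ?thesis
    unfolding del_vertex_E_def H_edges_def A1_def Y1_def windows by code_simp
qed

lemma H_minus_z_copy:
  assumes inj: "inj_on x {1..9}" and windows: "\<forall>j<5. x ` {j+1..j+5} \<in> S"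
    and last_two: "x ` Y1 \<in> S \<and> (x ` A1 \<in> S \<or> x ` B1 \<in> S) \<or> x ` Y2 \<in> S \<and> (x ` A2 \<in> S \<or> x ` B2 \<in> S)"
  shows "contains_copy S (del_vertex_V H_vertices 0) (del_vertex_E H_edges 0)"
proof -
  define W :: "nat set set" where "W = (\<lambda>j. {j+1..j+5}) ` {..<5}"
  have copy: "contains_copy S (del_vertex_V H_vertices 0) (del_vertex_E H_edges 0)"
    if "x ` Y \<in> S" "x ` P \<in> S" "bij_betw \<pi> {1..9} {1..9}"
      "(`) \<pi> ` del_vertex_E H_edges 0 \<subseteq> insert Y (insert P W)" for \<pi> Y P
    unfolding H_minus_z_vertices
  proof (intro contains_copy_permute[OF inj that(3)] ballI)
    fix e assume "e \<in> del_vertex_E H_edges 0"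
    then have "\<pi> ` e \<in> insert Y (insert P W)"
      using that(4) by blast
    moreover have "x ` I \<in> S" if "I \<in> W" for I
      using that windows unfolding W_def by auto
    ultimately show "x ` \<pi> ` e \<in> S"
      using that(1,2) by blast
  qed
  have relabelled: "(`) \<pi> ` del_vertex_E H_edges 0 \<subseteq> insert Y (insert P W) \<longleftrightarrow>
      (`) \<pi> ` {A1, Y1, {1..5}, {2..6}, {3..7}, {4..8}, {5..9}}
        \<subseteq> {Y, P, {1..5}, {2..6}, {3..7}, {4..8}, {5..9}}" for \<pi> :: "nat \<Rightarrow> nat" and Y P
  proof -
    have "W = {{1..5}, {2..6}, {3..7}, {4..8}, {5..9}}"
      unfolding W_def by code_simp
    then show ?thesis
      unfolding H_minus_z_edges by simp
  qed
  from last_two show ?thesis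
  proof (elim disjE conjE)
    assume "x ` Y1 \<in> S" "x ` A1 \<in> S"
    then show ?thesis
      by (rule copy[where \<pi> = id]) (unfold relabelled Y1_def A1_def, code_simp+)
  next
    assume "x ` Y1 \<in> S" "x ` B1 \<in> S"
    then show ?thesis
      by (rule copy[where \<pi> = "\<lambda>i. if i \<le> 8 then 9 - i else i"])
        (unfold relabelled Y1_def A1_def B1_def, code_simp+)
  next
    assume "x ` Y2 \<in> S" "x ` A2 \<in> S"
    then show ?thesis
      by (rule copy[where \<pi> = "\<lambda>i. 10 - i"]) (unfold relabelled Y1_def A1_def Y2_def A2_def, code_simp+)
  next
    assume "x ` Y2 \<in> S" "x ` B2 \<in> S"
    then show ?thesis
      by (rule copy[where \<pi> = "\<lambda>i. if i \<le> 8 then i + 1 else 1"])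
        (unfold relabelled Y1_def A1_def Y2_def B2_def, code_simp+)
  qed
qed

definition fresh_vertex :: "nat set list \<Rightarrow> nat" where
  "fresh_vertex h = Suc (Max (\<Union>(set h)))"

lemma less_fresh_vertex:
  assumes "\<forall>Z\<in>set h. finite Z" "Z \<in> set h" "v \<in> Z"
  shows "v < fresh_vertex h"
  using assms unfolding fresh_vertex_def
  by (metis List.finite_set Max_ge UnionI finite_Union le_imp_less_Suc)

lemma fresh_vertex_unclaimed:
  "\<forall>Z\<in>set h. finite Z \<Longrightarrow> fresh_vertex h \<in> e \<Longrightarrow> e \<notin> set h"
  using less_fresh_vertex by blast

text \<open>
  Vertex \<open>x i\<close> of the path, read off SP's opening edges (positions 1, 3, \<dots>, 9 of the
  history): the least element of his \<open>i\<close>-th edge for \<open>i \<le> 5\<close>, the largest element of his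
  \<open>(i - 4)\<close>-th edge otherwise.
\<close>

definition hist_vertex :: "nat set list \<Rightarrow> nat \<Rightarrow> nat" where
  "hist_vertex h i = (if i \<le> 5 then Min (h ! (2*i - 1)) else Max (h ! (2*i - 9)))"

definition sp_strategy :: "nat set list \<Rightarrow> nat set" where
  "sp_strategy h =
     (let n = length h; x = hist_vertex h; m = fresh_vertex h in
      if n = 1 then {m..m+4}
      else if n < 10 then insert m (h ! (n-2) - {Min (h ! (n-2))})
      else if n = 11 then (if h ! 10 \<in> {x ` Y1, x ` A1, x ` B1} then x ` Y2 else x ` Y1)
      else if h ! 11 = x ` Y1 then (if x ` A1 \<in> set h then x ` B1 else x ` A1)
      else (if x ` A2 \<in> set h then x ` B2 else x ` A2))"

lemma sp_strategy_sixth_move: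
  "length h = 11 \<Longrightarrow> sp_strategy h =
     (let x = hist_vertex h in if h ! 10 \<in> {x ` Y1, x ` A1, x ` B1} then x ` Y2 else x ` Y1)"
  unfolding sp_strategy_def by (simp add: Let_def)

lemma sp_strategy_seventh_move:
  "length h = 13 \<Longrightarrow> sp_strategy h =
     (let x = hist_vertex h in
      if h ! 11 = x ` Y1 then (if x ` A1 \<in> set h then x ` B1 else x ` A1)
      else (if x ` A2 \<in> set h then x ` B2 else x ` A2))"
  unfolding sp_strategy_def by (simp add: Let_def)

definition window_history :: "nat \<Rightarrow> nat set list \<Rightarrow> (nat \<Rightarrow> nat) \<Rightarrow> bool" where
  "window_history k h x \<longleftrightarrow>
     length h = 2*k \<and> strict_mono_on {1..k+4} x \<and>
     (\<forall>j<k. h ! (2*j+1) = x ` {j+1..j+5}) \<and>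
     (\<forall>j<2*k-1. \<forall>v\<in>h!j. v < x (k+4)) \<and> (\<forall>Z\<in>set h. finite Z)"

lemma window_history_first:
  assumes "card e = 5"
  shows "legal [e] (sp_strategy [e])"
    and "window_history 1 [e, sp_strategy [e]] (\<lambda>i. i + (fresh_vertex [e] - 1))"
proof -
  let ?m = "fresh_vertex [e]"
  have move: "sp_strategy [e] = {?m..?m+4}"
    by (simp add: sp_strategy_def Let_def)
  have "finite e"
    using assms by (intro card_ge_0_finite) simp
  then show "legal [e] (sp_strategy [e])"
    unfolding move legal_def using fresh_vertex_unclaimed[of "[e]"] by auto
  have "?m > 0" by (simp add: fresh_vertex_def)
  then have window: "(\<lambda>i. i + (?m - 1)) ` {1..5} = {?m..?m+4}"
    by (subst image_add_atLeastAtMost') simp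
  show "window_history 1 [e, sp_strategy [e]] (\<lambda>i. i + (fresh_vertex [e] - 1))"
    unfolding window_history_def move
    using window less_fresh_vertex[of "[e]" e] \<open>finite e\<close> \<open>?m > 0\<close>
    by (auto simp: strict_mono_on_def less_imp_le_nat trans_less_add2)
qed

lemma image_window_minus_first:
  fixes k :: nat and x :: "nat \<Rightarrow> 'a::preorder"
  assumes "strict_mono_on {k..k+4} x"
  shows "x ` {k..k+4} - {x k} = x ` {k+1..k+4}"
proof -
  have "{k..k+4} = insert k {k+1..k+4}" by auto
  moreover have "x k \<notin> x ` {k+1..k+4}"
    using inj_on_image_mem_iff[OF strict_mono_on_imp_inj_on[OF assms], of k "{k+1..k+4}"]
    by auto
  ultimately show ?thesis by auto
qed

lemma insert_image_fun_upd_window: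
  fixes k :: nat
  shows "insert m (x ` {k+1..k+4}) = (x(k+5 := m)) ` {k+1..k+5}"
proof -
  have "{k+1..k+5} = insert (k+5) {k+1..k+4}" by auto
  moreover have "{k+1..k+4} \<inter> {i. i \<noteq> k + 5} = {k+1..k+4}" by auto
  ultimately show ?thesis by (simp add: fun_upd_image)
qed

lemma strict_mono_on_fun_upd_Suc:
  fixes x :: "nat \<Rightarrow> 'a::order"
  assumes "strict_mono_on {1..n} x" "\<forall>i\<in>{1..n}. x i < m"
  shows "strict_mono_on {1..Suc n} (x(Suc n := m))"
proof (rule strict_mono_onI)
  fix r s :: nat assume "r \<in> {1..Suc n}" "s \<in> {1..Suc n}" "r < s"
  then show "(x(Suc n := m)) r < (x(Suc n := m)) s"
    using assms strict_mono_onD[OF assms(1), of r s] by (cases "s = Suc n") auto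
qed

lemma window_history_step:
  assumes hist: "window_history k h x" and k: "1 \<le> k" "k < 5" and e: "card e = 5"
  defines "m \<equiv> fresh_vertex (h @ [e])"
  shows "legal (h @ [e]) (sp_strategy (h @ [e]))"
    and "window_history (Suc k) (h @ [e, sp_strategy (h @ [e])]) (x(k+5 := m))"
proof -
  let ?h = "h @ [e]" and ?x = "x(k+5 := m)"
  have len: "length h = 2*k" and mono: "strict_mono_on {1..k+4} x"
    and windows: "\<forall>j<k. h ! (2*j+1) = x ` {j+1..j+5}" and fin: "\<forall>Z\<in>set ?h. finite Z"
    using hist card_ge_0_finite[of e] e by (auto simp: window_history_def)
  have last_window: "?h ! (2*k - 1) = x ` {k..k+4}"
  proof -
    obtain j where "k = Suc j" using k by (cases k) auto
    then show ?thesis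
      using windows[rule_format, of j] len by (simp add: nth_append add.commute)
  qed
  have new: "x i < m" if "i \<in> {1..k+4}" for i
  proof -
    have "?h ! (2*k - 1) \<in> set ?h"
      using len k by (intro nth_mem) simp
    then have "x (k+4) < m"
      unfolding m_def last_window by (intro less_fresh_vertex[OF fin]) auto
    then show ?thesis
      using strict_mono_on_leD[OF mono that, of "k+4"] that by simp
  qed
  have mono': "strict_mono_on {k..k+4} x"
    using mono k by (auto intro: monotone_on_subset)
  then have "sp_strategy ?h = insert m (x ` {k..k+4} - {x k})"
    using last_window len k
    by (simp add: sp_strategy_def Let_def m_def Min_image_strict_mono_on numeral_eq_Suc)
  also have "\<dots> = insert m (x ` {k+1..k+4})"
    using image_window_minus_first[OF mono'] by simp
  finally have move: "sp_strategy ?h = insert m (x ` {k+1..k+4})" .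
  then have move_window: "sp_strategy ?h = ?x ` {k+1..k+5}"
    by (simp only: insert_image_fun_upd_window)
  have "card (x ` {k+1..k+4}) = 4"
    using mono' by (subst card_image) (auto intro: strict_mono_on_imp_inj_on inj_on_subset)
  moreover have "m \<notin> x ` {k+1..k+4}"
  proof
    assume "m \<in> x ` {k+1..k+4}"
    then obtain i where "i \<in> {k+1..k+4}" "m = x i" by blast
    with new[of i] k show False by simp
  qed
  ultimately show "legal ?h (sp_strategy ?h)"
    unfolding legal_def move m_def using fresh_vertex_unclaimed[OF fin] by simp
  have "strict_mono_on {1..k+5} ?x"
    using strict_mono_on_fun_upd_Suc[OF mono, of m] new by (simp add: add.commute[of 5 k])
  moreover have "(h @ [e, sp_strategy ?h]) ! (2*j+1) = ?x ` {j+1..j+5}" if "j < Suc k" for j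
  proof (cases "j = k")
    case False
    then have "?x ` {j+1..j+5} = x ` {j+1..j+5}"
      using that by (intro image_cong) auto
    then show ?thesis
      using windows False that len by (simp add: nth_append)
  qed (simp add: len move_window nth_append)
  moreover have "v < m" if "j < 2*k+1" "v \<in> (h @ [e, sp_strategy ?h]) ! j" for j v
    using that len unfolding m_def
    by (intro less_fresh_vertex[OF fin, of "?h ! j"]) (auto simp: nth_append)
  ultimately show "window_history (Suc k) (h @ [e, sp_strategy ?h]) ?x"
    unfolding window_history_def using len fin move by (auto simp: add.commute[of 5 k])
qed

lemma sp_opening:
  assumes "\<forall>i<5. card (fp i) = 5"
  shows "\<exists>x. window_history 5 (play sp_strategy fp 5) x"
    and "\<forall>i<5. legal (play sp_strategy fp i @ [fp i]) (sp_strategy (play sp_strategy fp i @ [fp i]))"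
proof -
  let ?h = "\<lambda>i. play sp_strategy fp i @ [fp i]"
  have "(\<exists>x. window_history k (play sp_strategy fp k) x) \<and> (\<forall>i<k. legal (?h i) (sp_strategy (?h i)))"
    if "1 \<le> k" "k \<le> 5" for k
    using that
  proof (induction k rule: nat_induct_at_least)
    case base
    then show ?case
      using window_history_first[of "fp 0"] assms by (auto simp: play_Suc)
  next
    case (Suc k)
    then obtain x where "window_history k (play sp_strategy fp k) x"
      and "\<forall>i<k. legal (?h i) (sp_strategy (?h i))" by auto
    then show ?case
      using window_history_step[of k _ x "fp k"] assms Suc.hyps Suc.prems
      by (auto simp: play_Suc less_Suc_eq)
  qed
  from this[of 5] show "\<exists>x. window_history 5 (play sp_strategy fp 5) x"
    and "\<forall>i<5. legal (?h i) (sp_strategy (?h i))" by simp_all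
qed

lemma hist_vertex_after_opening:
  assumes hist: "window_history 5 h x" and i: "i \<in> {1..9}"
  shows "hist_vertex (h @ t) i = x i"
proof -
  have len: "length h = 10" and mono: "strict_mono_on {1..9} x"
    and windows: "\<forall>j<5. h ! (2*j+1) = x ` {j+1..j+5}"
    using hist by (simp_all add: window_history_def)
  have mono_window: "strict_mono_on {j+1..j+5} x" if "j < 5" for j
    using mono that by (auto intro: monotone_on_subset)
  show ?thesis
  proof (cases "i \<le> 5")
    case True
    moreover have "2*(i-1)+1 = 2*i - 1" "2*i - 1 < 10" "i-1+1 = i" "i-1+5 = i+4"
      using i True by auto
    ultimately have "(h @ t) ! (2*i - 1) = x ` {i..i+4}"
      using windows[rule_format, of "i - 1"] i len by (simp add: nth_append add.commute)
    then show ?thesis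
      using True Min_image_strict_mono_on[OF mono_window[of "i - 1"]] i
      by (simp add: hist_vertex_def add.commute)
  next
    case False
    moreover have idx: "2*(i-5)+1 = 2*i - 9" "2*i - 9 < 10" "i-5+1 = i-4" "i-5+5 = i"
      using i False by auto
    ultimately have "(h @ t) ! (2*i - 9) = x ` {i-4..i}"
      using windows[rule_format, of "i - 5"] i len by (simp add: nth_append add.commute)
    then show ?thesis
      using False Max_image_strict_mono_on[OF mono_window[of "i - 5", unfolded idx]] i
      by (simp add: hist_vertex_def)
  qed
qed

lemma hist_vertex_image_after_opening:
  "window_history 5 h x \<Longrightarrow> I \<subseteq> {1..9} \<Longrightarrow> hist_vertex (h @ t) ` I = x ` I"
  using hist_vertex_after_opening by (intro image_cong) auto

lemma end_vertices_apart:
  assumes hist: "window_history 5 h x" and "Z \<in> set h" "x 1 \<in> Z"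
  shows "x 9 \<notin> Z"
proof -
  obtain j where j: "j < 10" "Z = h ! j"
    using assms(2) hist by (auto simp: window_history_def in_set_conv_nth)
  have mono: "strict_mono_on {1..9} x"
    using hist by (simp add: window_history_def)
  show ?thesis
  proof (cases "j = 9")
    case True
    then have "Z = x ` {5..9}"
      using hist j by (auto simp: window_history_def dest: spec[of _ 4])
    then show ?thesis
      using assms(3) inj_on_image_mem_iff[OF strict_mono_on_imp_inj_on[OF mono], of 1 "{5..9}"]
      by auto
  next
    case False
    with j have "j < 9" by simp
    with j have "\<forall>v\<in>Z. v < x 9"
      using hist by (simp add: window_history_def)
    then show ?thesis by blast
  qed
qed

lemma endgame_index_sets:
  "I \<in> {Y1, A1, B1, Y2, A2, B2} \<Longrightarrow> I \<subseteq> {1..9} \<and> 1 \<in> I \<and> 9 \<in> I \<and> card I = 5"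
  unfolding Y1_def A1_def B1_def Y2_def A2_def B2_def by auto

lemma endgame_candidates:
  assumes hist: "window_history 5 h x"
  shows "distinct [x ` Y1, x ` A1, x ` B1, x ` Y2, x ` A2, x ` B2]"
    and "{x ` Y1, x ` A1, x ` B1, x ` Y2, x ` A2, x ` B2} \<inter> set h = {}"
    and "\<forall>I\<in>{Y1, A1, B1, Y2, A2, B2}. card (x ` I) = 5"
proof -
  have inj: "inj_on x {1..9}"
    using hist by (simp add: window_history_def strict_mono_on_imp_inj_on)
  have "distinct [Y1, A1, B1, Y2, A2, B2]"
    unfolding Y1_def A1_def B1_def Y2_def A2_def B2_def by code_simp
  moreover have "inj_on ((`) x) {Y1, A1, B1, Y2, A2, B2}"
    using endgame_index_sets by (intro inj_onI) (simp add: inj_on_image_eq_iff[OF inj])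
  ultimately have "distinct (map ((`) x) [Y1, A1, B1, Y2, A2, B2])"
    by (simp add: distinct_map)
  then show "distinct [x ` Y1, x ` A1, x ` B1, x ` Y2, x ` A2, x ` B2]"
    by simp
  have "x ` I \<notin> set h" if "I \<in> {Y1, A1, B1, Y2, A2, B2}" for I
    using endgame_index_sets[OF that] end_vertices_apart[OF hist, of "x ` I"] by auto
  then show "{x ` Y1, x ` A1, x ` B1, x ` Y2, x ` A2, x ` B2} \<inter> set h = {}"
    by auto
  show "\<forall>I\<in>{Y1, A1, B1, Y2, A2, B2}. card (x ` I) = 5"
    using endgame_index_sets inj by (simp add: card_image inj_on_subset)
qed

lemma sp_endgame:
  assumes hist: "window_history 5 h x"
    and s_def: "s = sp_strategy (h @ [f])" and t_def: "t = sp_strategy (h @ [f, s, g])"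
  shows "legal (h @ [f]) s" and "legal (h @ [f, s, g]) t"
    and "s = x ` Y1 \<and> t \<in> {x ` A1, x ` B1} \<or> s = x ` Y2 \<and> t \<in> {x ` A2, x ` B2}"
proof -
  have len: "length h = 10"
    using hist by (simp add: window_history_def)
  have "hist_vertex (h @ u) ` I = x ` I" if "I \<in> {Y1, A1, B1, Y2, A2, B2}" for I u
    using endgame_index_sets[OF that] hist_vertex_image_after_opening[OF hist] by blast
  then have vertices: "hist_vertex (h @ u) ` Y1 = x ` Y1" "hist_vertex (h @ u) ` A1 = x ` A1"
      "hist_vertex (h @ u) ` B1 = x ` B1" "hist_vertex (h @ u) ` Y2 = x ` Y2"
      "hist_vertex (h @ u) ` A2 = x ` A2" "hist_vertex (h @ u) ` B2 = x ` B2" for u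
    by simp_all
  have s: "s = (if f \<in> {x ` Y1, x ` A1, x ` B1} then x ` Y2 else x ` Y1)"
    using len unfolding s_def by (simp add: sp_strategy_sixth_move Let_def vertices nth_append)
  have len_13: "length (h @ [f, s, g]) = 13" and nth_11: "(h @ [f, s, g]) ! 11 = s"
    using len by (simp_all add: nth_append)
  have "t = (let x = hist_vertex (h @ [f, s, g]) in
      if (h @ [f, s, g]) ! 11 = x ` Y1 then (if x ` A1 \<in> set (h @ [f, s, g]) then x ` B1 else x ` A1)
      else (if x ` A2 \<in> set (h @ [f, s, g]) then x ` B2 else x ` A2))"
    unfolding t_def by (rule sp_strategy_seventh_move[OF len_13])
  then have t: "t = (if s = x ` Y1 then (if x ` A1 \<in> set (h @ [f, s, g]) then x ` B1 else x ` A1)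
                else (if x ` A2 \<in> set (h @ [f, s, g]) then x ` B2 else x ` A2))"
    unfolding Let_def vertices nth_11 .
  note reply = reply_from_two_triples[OF endgame_candidates(1,2)[OF hist] s t]
  show "s = x ` Y1 \<and> t \<in> {x ` A1, x ` B1} \<or> s = x ` Y2 \<and> t \<in> {x ` A2, x ` B2}"
    by (fact reply(3))
  have "card s = 5" "card t = 5"
    using reply(3) endgame_candidates(3)[OF hist] by auto
  with reply(1,2) show "legal (h @ [f]) s" "legal (h @ [f, s, g]) t"
    unfolding legal_def by simp_all
qed

lemma sp_strategy_wins:
  assumes fp_legal: "\<forall>i<7. legal (play sp_strategy fp i) (fp i)"
  shows "\<forall>i<7. legal (play sp_strategy fp i @ [fp i]) (sp_strategy (play sp_strategy fp i @ [fp i]))"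
    and "contains_copy (sp_edges (play sp_strategy fp 7)) (del_vertex_V H_vertices 0) (del_vertex_E H_edges 0)"
proof -
  let ?play = "play sp_strategy fp"
  have "\<forall>i<5. card (fp i) = 5"
    using fp_legal by (simp add: legal_def)
  then obtain x where hist: "window_history 5 (?play 5) x"
    and opening_legal: "\<forall>i<5. legal (?play i @ [fp i]) (sp_strategy (?play i @ [fp i]))"
    using sp_opening by blast
  define s where "s = sp_strategy (?play 5 @ [fp 5])"
  define t where "t = sp_strategy (?play 5 @ [fp 5, s, fp 6])"
  have play_6: "?play 6 = ?play 5 @ [fp 5, s]"
    using play_Suc[of sp_strategy fp 5] by (simp add: s_def)
  have play_7: "?play 7 = ?play 5 @ [fp 5, s, fp 6, t]"
    using play_Suc[of sp_strategy fp 6] by (simp add: play_6 t_def)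
  note endgame = sp_endgame[OF hist s_def t_def]
  show "\<forall>i<7. legal (?play i @ [fp i]) (sp_strategy (?play i @ [fp i]))"
  proof (intro allI impI)
    fix i :: nat assume "i < 7"
    then consider "i < 5" | "i = 5" | "i = 6" by linarith
    then show "legal (?play i @ [fp i]) (sp_strategy (?play i @ [fp i]))"
    proof cases
      case 1
      with opening_legal show ?thesis by blast
    next
      case 2
      with endgame(1) show ?thesis by (simp add: s_def)
    next
      case 3
      with endgame(2) show ?thesis by (simp add: play_6 flip: t_def)
    qed
  qed
  have len: "length (?play 5) = 10"
    using hist by (simp add: window_history_def)
  have claimed: "?play 7 ! j \<in> sp_edges (?play 7)" if "j < 14" "odd j" for j
    using that len by (intro sp_edges_nth) (simp_all add: play_7)
  have "x ` {j+1..j+5} = ?play 7 ! (2*j+1)" if "j < 5" for j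
    using hist that len by (simp add: window_history_def play_7 nth_append)
  then have "\<forall>j<5. x ` {j+1..j+5} \<in> sp_edges (?play 7)"
    using claimed by simp
  moreover have "s \<in> sp_edges (?play 7)" "t \<in> sp_edges (?play 7)"
    using claimed[of 11] claimed[of 13] len by (simp_all add: play_7 nth_append)
  moreover have "inj_on x {1..9}"
    using hist by (simp add: window_history_def strict_mono_on_imp_inj_on)
  ultimately show "contains_copy (sp_edges (?play 7)) (del_vertex_V H_vertices 0) (del_vertex_E H_edges 0)"
    using endgame(3) by (intro H_minus_z_copy) auto
qed

theorem lemma4p1:
  shows "sp_fast_win 7 (del_vertex_V H_vertices 0) (del_vertex_E H_edges 0)"
  unfolding sp_fast_win_def using sp_strategy_wins by blast

end
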